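(* Let $\mathcal G=((V,E),(V_1,V_2,V_\Diamond),\delta,w)$ be a stochastic game and let $\mathsf r$ be a real vector indexed by $V$ that satisfies the Bellman condition, with classes $C_1,\dots,C_k$. Let $i\in\{1,2\}$ and suppose Player $i$ follows a strategy such that, each time the token is on a vertex $v\in V_i$, the chosen successor lies in the same class as $v$. Then, for every initial vertex and every strategy of the other player, with probability $1$ the token eventually reaches a class $C_j$ (for some $1\le j\le k$) which it never leaves afterwards.
   Context: A stochastic game is $\mathcal{G}=((V,E),(V_1,V_2,V_\Diamond),\delta,w)$: a finite directed graph $(V,E)$ in which every vertex $v$ has a nonempty out-neighbour set $E(v)$, a partition of $V$ into Player 1, Player 2 and probabilistic vertices, a function $\delta$ giving each $v\in V_\Diamond$ a probability distribution $\delta(v)$ on $E(v)$, positive on every out-neighbour, and payoffs $w:E\to\mathbb{Q}$. The game proceeds by moving a token: from $v\in V_i$ Player $i$ chooses a successor, from $v\in V_\Diamond$ the successor $v'$ is chosen with probability $\delta(v)(v')$. Strategies are (deterministic) functions from finite histories ending in $V_i$ to successors; a strategy pair and initial vertex induce a probability measure on plays. For a real vector $\mathsf r=(r_v)_{v\in V}$, its classes $C_1,\dots,C_k$ are the maximal nonempty sets of vertices on which $\mathsf r$ is constant. $\mathsf r$ satisfies the Bellman condition if for every $v$: $r_v=\max_{v'\in E(v)}r_{v'}$ if $v\in V_1$, $r_v=\min_{v'\in E(v)}r_{v'}$ if $v\in V_2$, $r_v=\sum_{v'\in E(v)}\delta(v)(v')r_{v'}$ if $v\in V_\Diamond$. 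*)

theory Defs
  imports "HOL-Probability.Probability"
begin

text \<open>The payoff function w is irrelevant for the statement and omitted.\<close>
definition stochastic_game ::
  "'v set \<Rightarrow> ('v \<times> 'v) set \<Rightarrow> 'v set \<Rightarrow> 'v set \<Rightarrow> 'v set \<Rightarrow> ('v \<Rightarrow> 'v pmf) \<Rightarrow> bool" where
  "stochastic_game V E V1 V2 VP \<delta> \<longleftrightarrow>
     finite V \<and> E \<subseteq> V \<times> V \<and> (\<forall>v\<in>V. E `` {v} \<noteq> {}) \<and>
     V1 \<union> V2 \<union> VP = V \<and> V1 \<inter> V2 = {} \<and> V1 \<inter> VP = {} \<and> V2 \<inter> VP = {} \<and>
     (\<forall>v\<in>VP. set_pmf (\<delta> v) = E `` {v})"

definition is_history :: "'v set \<Rightarrow> ('v \<times> 'v) set \<Rightarrow> 'v list \<Rightarrow> bool" where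
  "is_history V E h \<longleftrightarrow> h \<noteq> [] \<and> set h \<subseteq> V \<and>
     (\<forall>k. Suc k < length h \<longrightarrow> (h ! k, h ! Suc k) \<in> E)"

definition strategy :: "'v set \<Rightarrow> ('v \<times> 'v) set \<Rightarrow> 'v set \<Rightarrow> ('v list \<Rightarrow> 'v) \<Rightarrow> bool" where
  "strategy V E Vi \<sigma> \<longleftrightarrow> (\<forall>h. is_history V E h \<and> last h \<in> Vi \<longrightarrow> (last h, \<sigma> h) \<in> E)"

definition bellman ::
  "'v set \<Rightarrow> ('v \<times> 'v) set \<Rightarrow> 'v set \<Rightarrow> 'v set \<Rightarrow> 'v set \<Rightarrow> ('v \<Rightarrow> 'v pmf) \<Rightarrow> ('v \<Rightarrow> real) \<Rightarrow> bool" where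
  "bellman V E V1 V2 VP \<delta> r \<longleftrightarrow>
     (\<forall>v\<in>V1. r v = Max (r ` (E `` {v}))) \<and>
     (\<forall>v\<in>V2. r v = Min (r ` (E `` {v}))) \<and>
     (\<forall>v\<in>VP. r v = (\<Sum>u\<in>E `` {v}. pmf (\<delta> v) u * r u))"

text \<open>The classes of r: maximal nonempty subsets of V on which r is constant (the level sets).\<close>
definition classes :: "'v set \<Rightarrow> ('v \<Rightarrow> real) \<Rightarrow> 'v set set" where
  "classes V r = {{u \<in> V. r u = r v} | v. v \<in> V}"

text \<open>The randomness is an i.i.d. stream
  of choice functions f, where f v is distributed according to \<delta> v independently for each
  probabilistic vertex v; at step n, a probabilistic vertex v moves to (\<omega> !! n) v. This yields
  exactly the law of the play determined by the two strategies and \<delta>.\<close>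
definition next_vertex ::
  "'v set \<Rightarrow> 'v set \<Rightarrow> ('v list \<Rightarrow> 'v) \<Rightarrow> ('v list \<Rightarrow> 'v) \<Rightarrow> 'v list \<Rightarrow> ('v \<Rightarrow> 'v) \<Rightarrow> 'v" where
  "next_vertex V1 V2 \<sigma>1 \<sigma>2 h f =
     (if last h \<in> V1 then \<sigma>1 h else if last h \<in> V2 then \<sigma>2 h else f (last h))"

fun history ::
  "'v set \<Rightarrow> 'v set \<Rightarrow> ('v list \<Rightarrow> 'v) \<Rightarrow> ('v list \<Rightarrow> 'v) \<Rightarrow> 'v \<Rightarrow> ('v \<Rightarrow> 'v) stream \<Rightarrow> nat \<Rightarrow> 'v list"
where
  "history V1 V2 \<sigma>1 \<sigma>2 s \<omega> 0 = [s]"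
| "history V1 V2 \<sigma>1 \<sigma>2 s \<omega> (Suc n) =
     (let h = history V1 V2 \<sigma>1 \<sigma>2 s \<omega> n in h @ [next_vertex V1 V2 \<sigma>1 \<sigma>2 h (\<omega> !! n)])"

definition play ::
  "'v set \<Rightarrow> 'v set \<Rightarrow> ('v list \<Rightarrow> 'v) \<Rightarrow> ('v list \<Rightarrow> 'v) \<Rightarrow> 'v \<Rightarrow> ('v \<Rightarrow> 'v) stream \<Rightarrow> 'v stream" where
  "play V1 V2 \<sigma>1 \<sigma>2 s \<omega> = smap (\<lambda>n. last (history V1 V2 \<sigma>1 \<sigma>2 s \<omega> n)) nats"

definition play_measure ::
  "'v set \<Rightarrow> 'v set \<Rightarrow> 'v set \<Rightarrow> ('v \<Rightarrow> 'v pmf) \<Rightarrow> ('v list \<Rightarrow> 'v) \<Rightarrow> ('v list \<Rightarrow> 'v) \<Rightarrow> 'v \<Rightarrow> 'v stream measure"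
where
  "play_measure V1 V2 VP \<delta> \<sigma>1 \<sigma>2 s =
     distr (stream_space (measure_pmf (Pi_pmf VP s \<delta>))) (stream_space (count_space UNIV))
       (play V1 V2 \<sigma>1 \<sigma>2 s)"

end

theory Submission
  imports Defs
begin

(* Let \<rho> be r for i = 1 and -r for i = 2. Then moves of Player i keep \<rho> constant, moves of
   the opponent can only increase it (by the max/min equations), and at a random vertex \<rho> is the
   mean of \<rho> over the successors. Along a play \<rho> takes finitely many values, so if it did not
   stabilise there would be a level x that is eventually never exceeded but from which \<rho> drops
   infinitely often. A drop can only happen at a random vertex, which then has a successor above x,
   chosen with probability at least the least transition probability q > 0. The supremum, over all
   starting histories, of the probability of staying at most x while meeting such vertices
   infinitely often is therefore at most (1 - q) times itself, hence 0. *)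

section \<open>Random walks driven by independent inputs\<close>

(* No measurability of f is needed: this is applied to the play map, which is only known to agree
   almost everywhere with a measurable map. *)
lemma AE_distr_of_AE_comp:
  assumes "AE x in M. P (f x)" and "{y \<in> space N. \<not> P y} \<in> sets N"
  shows "AE y in distr M N f. P y"
proof -
  let ?B = "{y \<in> space N. \<not> P y}"
  obtain Z where Z: "Z \<in> null_sets M" "{x \<in> space M. \<not> P (f x)} \<subseteq> Z"
    using assms(1) by (auto simp: eventually_ae_filter)
  have "emeasure M (f -` ?B \<inter> space M) \<le> emeasure M Z"
    using Z by (intro emeasure_mono) auto
  then have "emeasure M (f -` ?B \<inter> space M) = 0"
    using Z by auto
  then have "emeasure (distr M N f) ?B = 0"
    unfolding distr_def emeasure_measure_of_conv by simp
  then show ?thesis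
    using assms(2) by (intro AE_I'[of ?B]) auto
qed

lemma (in prob_space) emeasure_stream_space_pred:
  assumes "Measurable.pred (stream_space M) P"
  shows "emeasure (stream_space M) {\<omega> \<in> space (stream_space M). P \<omega>} =
    (\<integral>\<^sup>+x. emeasure (stream_space M) {\<omega> \<in> space (stream_space M). P (x ## \<omega>)} \<partial>M)"
proof -
  have "{\<omega> \<in> space (stream_space M). P \<omega>} \<in> sets (stream_space M)"
    using assms by measurable
  then show ?thesis
    by (auto simp: emeasure_stream_space space_stream_space streams_Stream intro!: nn_integral_cong)
qed

lemma ennreal_eq_0_if_le_contraction:
  fixes x :: ennreal
  assumes "x \<le> ennreal c * x" and "c < 1" and "x \<noteq> \<top>"
  shows "x = 0"
proof -
  obtain y where y: "x = ennreal y" "0 \<le> y"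
    using assms(3) by (cases x) auto
  have "y \<le> max 0 c * y"
    using assms(1) y ennreal_le_iff2 ennreal_mult'' by fastforce
  then have "(1 - max 0 c) * y \<le> 0"
    by (simp add: algebra_simps)
  then have "y \<le> 0"
    using assms(2) by (auto simp: mult_le_0_iff)
  then show ?thesis
    using y by simp
qed

lemma frequently_sequentially_Suc:
  "(\<exists>\<^sub>F n in sequentially. P (Suc n)) \<longleftrightarrow> (\<exists>\<^sub>F n in sequentially. P n)"
  unfolding frequently_def using eventually_sequentially_Suc[of "\<lambda>n. \<not> P n"] by (rule arg_cong)

primrec walk :: "('h \<Rightarrow> 'a \<Rightarrow> 'h) \<Rightarrow> 'h \<Rightarrow> 'a stream \<Rightarrow> nat \<Rightarrow> 'h" where
  "walk step h \<omega> 0 = h"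
| "walk step h \<omega> (Suc n) = step (walk step h \<omega> n) (\<omega> !! n)"

lemma walk_Cons_Suc: "walk step h (x ## \<omega>) (Suc n) = walk step (step h x) \<omega> n"
  by (induction n) simp_all

lemma countable_range_walk:
  assumes "\<And>h. countable (range (step h))"
  shows "countable (range (\<lambda>\<omega>. walk step h \<omega> n))"
proof (induction n)
  case (Suc n)
  have "range (\<lambda>\<omega>. walk step h \<omega> (Suc n)) \<subseteq> (\<Union>l \<in> range (\<lambda>\<omega>. walk step h \<omega> n). range (step l))"
    by auto
  then show ?case
    using Suc assms by (rule countable_subset[OF _ countable_UN])
qed simp

lemma measurable_walk:
  assumes "\<And>h. countable (range (step h))"
  shows "(\<lambda>\<omega>. walk step h \<omega> n) \<in> stream_space (measure_pmf p) \<rightarrow>\<^sub>M count_space UNIV"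
proof (induction n)
  case (Suc n)
  let ?I = "range (\<lambda>\<omega>. walk step h \<omega> n)"
  have step_n: "(\<lambda>\<omega>. step l (\<omega> !! n)) \<in> stream_space (measure_pmf p) \<rightarrow>\<^sub>M count_space UNIV" for l
    by (rule measurable_compose[OF measurable_snth]) (simp add: measurable_def)
  have walk_n: "(\<lambda>\<omega>. walk step h \<omega> n) \<in> stream_space (measure_pmf p) \<rightarrow>\<^sub>M count_space ?I"
    using measurable_restrict_space2[OF _ Suc, of ?I] by (simp add: restrict_count_space)
  have "(\<lambda>\<omega>. (\<lambda>l \<omega>. step l (\<omega> !! n)) (walk step h \<omega> n) \<omega>)
      \<in> stream_space (measure_pmf p) \<rightarrow>\<^sub>M count_space UNIV"
    using step_n walk_n countable_range_walk[OF assms] by (rule measurable_compose_countable')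
  then show ?case
    by simp
qed simp

locale escaping_walk =
  fixes p :: "'a pmf" and step :: "'h \<Rightarrow> 'a \<Rightarrow> 'h" and Safe Good :: "'h \<Rightarrow> bool" and q :: real
  assumes countable_step: "countable (range (step h))"
    and q_pos: "0 < q"
    and escape: "Good h \<Longrightarrow> measure_pmf.prob p {a. Safe (step h a)} \<le> 1 - q"
begin

abbreviation "S \<equiv> stream_space (measure_pmf p)"

lemma pred_walk: "Measurable.pred S (\<lambda>\<omega>. P (walk step h \<omega> n))"
  by (rule measurable_compose[OF measurable_walk[OF countable_step]]) simp

definition trapped :: "nat \<Rightarrow> 'h \<Rightarrow> 'a stream \<Rightarrow> bool" where
  "trapped N h \<omega> \<longleftrightarrow>
     (\<forall>n\<ge>N. Safe (walk step h \<omega> n)) \<and> (\<exists>\<^sub>F n in sequentially. Good (walk step h \<omega> n))"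

definition trapped_by :: "nat \<Rightarrow> 'h \<Rightarrow> 'a stream \<Rightarrow> bool" where
  "trapped_by T h \<omega> \<longleftrightarrow> trapped 0 h \<omega> \<and> (\<exists>n\<le>T. Good (walk step h \<omega> n))"

lemma pred_trapped: "Measurable.pred S (trapped N h)"
  unfolding trapped_def frequently_sequentially
  by (intro pred_intros_logic pred_intros_countable pred_intros_imp' pred_intros_conj1' pred_walk)

lemma pred_trapped_by: "Measurable.pred S (trapped_by T h)"
  unfolding trapped_by_def
  by (intro pred_intros_logic pred_intros_countable pred_intros_conj1' pred_walk pred_trapped)

lemmas sets_trapped = pred_trapped[unfolded pred_def]
  and sets_trapped_by = pred_trapped_by[unfolded pred_def]

lemma frequently_Good_Cons:
  "(\<exists>\<^sub>F n in sequentially. Good (walk step h (a ## \<omega>) n)) \<longleftrightarrow>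
   (\<exists>\<^sub>F n in sequentially. Good (walk step (step h a) \<omega> n))"
  using frequently_sequentially_Suc[of "\<lambda>n. Good (walk step h (a ## \<omega>) n)"]
  by (simp only: walk_Cons_Suc)

lemma trapped_0_Safe: "trapped 0 h \<omega> \<Longrightarrow> Safe h"
  unfolding trapped_def by (metis le0 walk.simps(1))

lemma trapped_0_Cons: "trapped 0 h (a ## \<omega>) \<longleftrightarrow> Safe h \<and> trapped 0 (step h a) \<omega>"
proof -
  have all_nat: "(\<forall>n. P n) \<longleftrightarrow> P 0 \<and> (\<forall>n. P (Suc n))" for P :: "nat \<Rightarrow> bool"
    by (metis nat.exhaust)
  show ?thesis
    using all_nat[of "\<lambda>n. Safe (walk step h (a ## \<omega>) n)"]
    by (simp only: trapped_def frequently_Good_Cons walk_Cons_Suc walk.simps(1) le0 simp_thms)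
      blast
qed

lemma trapped_Suc_Cons: "trapped (Suc N) h (a ## \<omega>) \<longleftrightarrow> trapped N (step h a) \<omega>"
proof -
  have all_ge_Suc: "(\<forall>n\<ge>Suc N. P n) \<longleftrightarrow> (\<forall>n\<ge>N. P (Suc n))" for P :: "nat \<Rightarrow> bool"
    by (metis Suc_le_D Suc_le_mono)
  show ?thesis
    using all_ge_Suc[of "\<lambda>n. Safe (walk step h (a ## \<omega>) n)"]
    by (simp only: trapped_def frequently_Good_Cons walk_Cons_Suc)
qed

lemma trapped_by_Suc_Cons:
  assumes "\<not> Good h" and "trapped_by (Suc T) h (a ## \<omega>)"
  shows "trapped_by T (step h a) \<omega>"
proof -
  obtain n where n: "n \<le> Suc T" "Good (walk step h (a ## \<omega>) n)"
    using assms(2) unfolding trapped_by_def by blast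
  with assms(1) obtain m where "n = Suc m"
    by (metis not0_implies_Suc walk.simps(1))
  with n have "m \<le> T" "Good (walk step (step h a) \<omega> m)"
    by (simp_all only: walk_Cons_Suc Suc_le_mono)
  then show ?thesis
    using assms(2) unfolding trapped_by_def trapped_0_Cons by blast
qed

lemma emeasure_S_Cons:
  assumes "Measurable.pred S P"
  shows "emeasure S {\<omega> \<in> space S. P \<omega>} = (\<integral>\<^sup>+a. emeasure S {\<omega> \<in> space S. P (a ## \<omega>)} \<partial>p)"
  using assms by (rule prob_space.emeasure_stream_space_pred[OF prob_space_measure_pmf])

lemma emeasure_trapped_Good_le:
  assumes "Good h" and bound: "\<And>h'. emeasure S {\<omega> \<in> space S. trapped 0 h' \<omega>} \<le> c"
  shows "emeasure S {\<omega> \<in> space S. trapped 0 h \<omega>} \<le> ennreal (1 - q) * c"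
proof -
  have "emeasure S {\<omega> \<in> space S. trapped 0 h \<omega>} =
      (\<integral>\<^sup>+a. emeasure S {\<omega> \<in> space S. trapped 0 h (a ## \<omega>)} \<partial>p)"
    by (rule emeasure_S_Cons[OF pred_trapped])
  also have "\<dots> \<le> (\<integral>\<^sup>+a. c * indicator {a. Safe (step h a)} a \<partial>p)"
  proof (rule nn_integral_mono)
    fix a
    show "emeasure S {\<omega> \<in> space S. trapped 0 h (a ## \<omega>)} \<le> c * indicator {a. Safe (step h a)} a"
    proof (cases "Safe (step h a)")
      case True
      have "emeasure S {\<omega> \<in> space S. trapped 0 h (a ## \<omega>)} \<le>
          emeasure S {\<omega> \<in> space S. trapped 0 (step h a) \<omega>}"
        by (rule emeasure_mono[OF _ sets_trapped]) (auto simp only: trapped_0_Cons)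
      then show ?thesis
        using True bound[of "step h a"] by simp
    next
      case False
      then have "{\<omega> \<in> space S. trapped 0 h (a ## \<omega>)} = {}"
        using trapped_0_Safe unfolding trapped_0_Cons by blast
      then show ?thesis
        by (metis emeasure_empty zero_le)
    qed
  qed
  also have "\<dots> = c * emeasure p {a. Safe (step h a)}"
    by (rule nn_integral_cmult_indicator) simp
  also have "\<dots> \<le> c * ennreal (1 - q)"
    using escape[OF \<open>Good h\<close>] by (intro mult_left_mono) (simp_all add: measure_pmf.emeasure_eq_measure ennreal_leI)
  finally show ?thesis
    by (simp add: mult.commute)
qed

lemma emeasure_trapped_by_le:
  assumes bound: "\<And>h'. emeasure S {\<omega> \<in> space S. trapped 0 h' \<omega>} \<le> c"
  shows "emeasure S {\<omega> \<in> space S. trapped_by T h \<omega>} \<le> ennreal (1 - q) * c"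
proof (induction T arbitrary: h)
  have Good_case: "emeasure S {\<omega> \<in> space S. trapped_by T h \<omega>} \<le> ennreal (1 - q) * c"
    if "Good h" for T h
  proof -
    have "emeasure S {\<omega> \<in> space S. trapped_by T h \<omega>} \<le> emeasure S {\<omega> \<in> space S. trapped 0 h \<omega>}"
      by (rule emeasure_mono[OF _ sets_trapped]) (auto simp only: trapped_by_def)
    also have "\<dots> \<le> ennreal (1 - q) * c"
      using that bound by (rule emeasure_trapped_Good_le)
    finally show ?thesis .
  qed
  {
    case 0
    show ?case
    proof (cases "Good h")
      case False
      then have "{\<omega> \<in> space S. trapped_by 0 h \<omega>} = {}"
        by (simp add: trapped_by_def)
      then show ?thesis
        by (metis emeasure_empty zero_le)
    qed (rule Good_case)
  next
    case (Suc T)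
    show ?case
    proof (cases "Good h")
      case False
      have "emeasure S {\<omega> \<in> space S. trapped_by (Suc T) h \<omega>} =
          (\<integral>\<^sup>+a. emeasure S {\<omega> \<in> space S. trapped_by (Suc T) h (a ## \<omega>)} \<partial>p)"
        by (rule emeasure_S_Cons[OF pred_trapped_by])
      also have "\<dots> \<le> (\<integral>\<^sup>+a. emeasure S {\<omega> \<in> space S. trapped_by T (step h a) \<omega>} \<partial>p)"
      proof (rule nn_integral_mono)
        fix a
        show "emeasure S {\<omega> \<in> space S. trapped_by (Suc T) h (a ## \<omega>)} \<le>
            emeasure S {\<omega> \<in> space S. trapped_by T (step h a) \<omega>}"
          using trapped_by_Suc_Cons[OF False] by (intro emeasure_mono[OF _ sets_trapped_by]) blast
      qed
      also have "\<dots> \<le> (\<integral>\<^sup>+a. ennreal (1 - q) * c \<partial>p)"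
        by (intro nn_integral_mono Suc.IH)
      finally show ?thesis
        by (simp add: measure_pmf.emeasure_space_1)
    qed (rule Good_case)
  }
qed

(* Split a trapped walk at its first Good state: from there the walk stays Safe with probability
   at most 1 - q, uniformly in the state, so any uniform bound c improves to (1 - q) c. *)
lemma emeasure_trapped_0_le:
  assumes bound: "\<And>h'. emeasure S {\<omega> \<in> space S. trapped 0 h' \<omega>} \<le> c"
  shows "emeasure S {\<omega> \<in> space S. trapped 0 h \<omega>} \<le> ennreal (1 - q) * c"
proof -
  have "{\<omega> \<in> space S. trapped 0 h \<omega>} = (\<Union>T. {\<omega> \<in> space S. trapped_by T h \<omega>})"
  proof (intro equalityI subsetI)
    fix \<omega>
    assume \<omega>: "\<omega> \<in> {\<omega> \<in> space S. trapped 0 h \<omega>}"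
    then have "\<exists>n. Good (walk step h \<omega> n)"
      by (simp add: trapped_def frequently_sequentially) blast
    then obtain n where "Good (walk step h \<omega> n)"
      by blast
    with \<omega> have "\<omega> \<in> {\<omega> \<in> space S. trapped_by n h \<omega>}"
      by (auto simp: trapped_by_def)
    then show "\<omega> \<in> (\<Union>T. {\<omega> \<in> space S. trapped_by T h \<omega>})"
      by blast
  qed (auto simp only: trapped_by_def)
  also have "emeasure S \<dots> = (SUP T. emeasure S {\<omega> \<in> space S. trapped_by T h \<omega>})"
  proof (rule SUP_emeasure_incseq[symmetric])
    show "incseq (\<lambda>T. {\<omega> \<in> space S. trapped_by T h \<omega>})"
      unfolding incseq_def trapped_by_def by (blast intro: le_trans)
  qed (use sets_trapped_by in blast)
  also have "\<dots> \<le> ennreal (1 - q) * c"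
    using bound by (intro SUP_least emeasure_trapped_by_le)
  finally show ?thesis .
qed

lemma emeasure_trapped_0: "emeasure S {\<omega> \<in> space S. trapped 0 h \<omega>} = 0"
proof -
  interpret prob_space S
    by (rule prob_space.prob_space_stream_space[OF prob_space_measure_pmf])
  define c where "c = (SUP h. emeasure S {\<omega> \<in> space S. trapped 0 h \<omega>})"
  have le_c: "emeasure S {\<omega> \<in> space S. trapped 0 h \<omega>} \<le> c" for h
    unfolding c_def by (rule SUP_upper) simp
  have "c \<le> ennreal (1 - q) * c"
    unfolding c_def by (intro SUP_least emeasure_trapped_0_le le_c[unfolded c_def])
  moreover have "c \<le> 1"
    unfolding c_def by (intro SUP_least emeasure_le_1)
  ultimately have "c = 0"
    using q_pos by (intro ennreal_eq_0_if_le_contraction) (auto simp: top_unique)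
  then show ?thesis
    using le_c[of h] by simp
qed

lemma emeasure_trapped: "emeasure S {\<omega> \<in> space S. trapped N h \<omega>} = 0"
proof (induction N arbitrary: h)
  case 0
  show ?case
    by (rule emeasure_trapped_0)
next
  case (Suc N)
  have "emeasure S {\<omega> \<in> space S. trapped (Suc N) h \<omega>} =
      (\<integral>\<^sup>+a. emeasure S {\<omega> \<in> space S. trapped (Suc N) h (a ## \<omega>)} \<partial>p)"
    by (rule emeasure_S_Cons[OF pred_trapped])
  then show ?case
    by (simp add: trapped_Suc_Cons Suc.IH)
qed

theorem AE_eventually_Safe_imp_not_frequently_Good:
  "AE \<omega> in S. (\<forall>\<^sub>F n in sequentially. Safe (walk step h \<omega> n)) \<longrightarrow>
     \<not> (\<exists>\<^sub>F n in sequentially. Good (walk step h \<omega> n))"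
proof -
  have "AE \<omega> in S. \<not> trapped N h \<omega>" for N
  proof (rule AE_I')
    show "{\<omega> \<in> space S. trapped N h \<omega>} \<in> null_sets S"
      using sets_trapped emeasure_trapped by blast
  qed blast
  then have "AE \<omega> in S. \<forall>N. \<not> trapped N h \<omega>"
    by (simp add: AE_all_countable)
  then show ?thesis
  proof eventually_elim
    case (elim \<omega>)
    show ?case
    proof
      assume "\<forall>\<^sub>F n in sequentially. Safe (walk step h \<omega> n)"
      then obtain N where "\<forall>n\<ge>N. Safe (walk step h \<omega> n)"
        unfolding eventually_sequentially by blast
      then show "\<not> (\<exists>\<^sub>F n in sequentially. Good (walk step h \<omega> n))"
        using elim[rule_format, of N] unfolding trapped_def by blast
    qed
  qed
qed

end

section \<open>Plays of a stochastic game\<close>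

lemma is_history_last_in: "is_history V E h \<Longrightarrow> last h \<in> V"
  unfolding is_history_def by (meson last_in_set subsetD)

lemma is_history_snoc:
  assumes "is_history V E l" and "(last l, u) \<in> E" and "E \<subseteq> V \<times> V"
  shows "is_history V E (l @ [u])"
  unfolding is_history_def
proof (intro conjI allI impI)
  show "set (l @ [u]) \<subseteq> V"
    using assms unfolding is_history_def by auto
  fix k
  assume "Suc k < length (l @ [u])"
  then consider "Suc k < length l" | "Suc k = length l"
    by fastforce
  then show "((l @ [u]) ! k, (l @ [u]) ! Suc k) \<in> E"
  proof cases
    case 1
    then show ?thesis
      using assms(1) by (simp add: is_history_def nth_append)
  next
    case 2
    then have "k = length l - 1"
      by simp
    then show ?thesis
      using assms(1,2) 2 by (simp add: is_history_def nth_append last_conv_nth)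
  qed
qed simp

lemma measurable_snth_count_space:
  assumes "space N = UNIV"
  shows "(\<lambda>\<omega>. f (\<omega> !! n)) \<in> stream_space (count_space UNIV) \<rightarrow>\<^sub>M N"
  by (rule measurable_compose[OF measurable_snth]) (simp add: assms)

locale stochastic_game_play =
  fixes V :: "'v set" and E :: "('v \<times> 'v) set" and V1 V2 VP :: "'v set" and \<delta> :: "'v \<Rightarrow> 'v pmf"
    and \<sigma>1 \<sigma>2 :: "'v list \<Rightarrow> 'v" and s :: 'v
  assumes game: "stochastic_game V E V1 V2 VP \<delta>"
    and strategy1: "strategy V E V1 \<sigma>1" and strategy2: "strategy V E V2 \<sigma>2"
    and s_in_V: "s \<in> V"
begin

lemma finite_V: "finite V"
  and E_subset: "E \<subseteq> V \<times> V"
  and vertex_cases: "V1 \<union> V2 \<union> VP = V"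
  and disjoint_VP: "V1 \<inter> VP = {}" "V2 \<inter> VP = {}"
  and set_pmf_\<delta>: "v \<in> VP \<Longrightarrow> set_pmf (\<delta> v) = E `` {v}"
  using game unfolding stochastic_game_def by auto

lemma finite_VP: "finite VP"
  using finite_V vertex_cases by (metis finite_Un)

lemma finite_E: "finite E"
  using finite_V E_subset by (metis finite_SigmaI finite_subset)

lemma finite_successors: "finite (E `` {v})"
  by (rule finite_subset[OF _ finite_V]) (use E_subset in blast)

definition choices :: "('v \<Rightarrow> 'v) pmf" where
  "choices = Pi_pmf VP s \<delta>"

(* Agrees with next_vertex on the support of choices; the fallback s only serves to give
   extend l a finite range, which makes the walk measurable. *)
definition move :: "'v list \<Rightarrow> ('v \<Rightarrow> 'v) \<Rightarrow> 'v" where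
  "move l f = (if last l \<in> V1 then \<sigma>1 l else if last l \<in> V2 then \<sigma>2 l
     else if f (last l) \<in> V then f (last l) else s)"

definition extend :: "'v list \<Rightarrow> ('v \<Rightarrow> 'v) \<Rightarrow> 'v list" where
  "extend l f = l @ [move l f]"

lemma countable_range_extend: "countable (range (extend l))"
proof -
  have "range (extend l) \<subseteq> (\<lambda>u. l @ [u]) ` (V \<union> {\<sigma>1 l, \<sigma>2 l, s})"
    by (auto simp: extend_def move_def)
  moreover have "finite ((\<lambda>u. l @ [u]) ` (V \<union> {\<sigma>1 l, \<sigma>2 l, s}))"
    using finite_V by simp
  ultimately show ?thesis
    by (rule countable_subset[OF _ countable_finite])
qed

lemma choice_in_PiE: "f \<in> set_pmf choices \<Longrightarrow> f \<in> PiE_dflt VP s (set_pmf \<circ> \<delta>)"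
  using set_Pi_pmf_subset'[OF finite_VP, of s \<delta>] unfolding choices_def by blast

lemma choice_in_V: "f \<in> set_pmf choices \<Longrightarrow> f v \<in> V"
  using choice_in_PiE[of f] set_pmf_\<delta> E_subset s_in_V
  unfolding PiE_dflt_def by (cases "v \<in> VP") auto

lemma choice_edge: "f \<in> set_pmf choices \<Longrightarrow> v \<in> VP \<Longrightarrow> (v, f v) \<in> E"
  using choice_in_PiE[of f] set_pmf_\<delta> unfolding PiE_dflt_def by auto

lemma move_edge:
  assumes "is_history V E l" and "f \<in> set_pmf choices"
  shows "(last l, move l f) \<in> E"
proof -
  from is_history_last_in[OF assms(1)] consider "last l \<in> V1" | "last l \<notin> V1" "last l \<in> V2" | "last l \<in> VP" "last l \<notin> V1 \<union> V2"
    using vertex_cases by blast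
  then show ?thesis
    using assms strategy1 strategy2 choice_edge choice_in_V
    by cases (auto simp: strategy_def move_def)
qed

lemma history_eq_walk:
  assumes "\<forall>n. \<omega> !! n \<in> set_pmf choices"
  shows "history V1 V2 \<sigma>1 \<sigma>2 s \<omega> n = walk extend [s] \<omega> n"
proof (induction n)
  case (Suc n)
  have "next_vertex V1 V2 \<sigma>1 \<sigma>2 l (\<omega> !! n) = move l (\<omega> !! n)" for l
    using assms choice_in_V by (auto simp: next_vertex_def move_def)
  then show ?case
    using Suc by (simp add: extend_def Let_def)
qed simp

lemma is_history_walk:
  assumes "\<forall>n. \<omega> !! n \<in> set_pmf choices"
  shows "is_history V E (walk extend [s] \<omega> n)"
proof (induction n)
  case 0
  then show ?case
    using s_in_V by (simp add: is_history_def)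
next
  case (Suc n)
  then show ?case
    using assms move_edge E_subset by (simp add: extend_def is_history_snoc)
qed

lemma AE_choices: "AE \<omega> in stream_space choices. \<forall>n. \<omega> !! n \<in> set_pmf choices"
  using prob_space.AE_stream_all[OF prob_space_measure_pmf _ AE_measure_pmf[of choices]]
  unfolding stream_all_def by (rule eventually_mono) simp_all

lemma play_eq_walk:
  assumes "\<forall>n. \<omega> !! n \<in> set_pmf choices"
  shows "play V1 V2 \<sigma>1 \<sigma>2 s \<omega> !! n = last (walk extend [s] \<omega> n)"
  using history_eq_walk[OF assms] by (simp add: play_def)

lemma AE_play_measureI:
  assumes "AE \<omega> in stream_space choices. P (play V1 V2 \<sigma>1 \<sigma>2 s \<omega>)"
    and "Measurable.pred (stream_space (count_space UNIV)) P"
  shows "AE p in play_measure V1 V2 VP \<delta> \<sigma>1 \<sigma>2 s. P p"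
  unfolding play_measure_def choices_def[symmetric]
  using assms by (intro AE_distr_of_AE_comp) (auto simp: pred_def)

lemma AE_play_in_V: "AE p in play_measure V1 V2 VP \<delta> \<sigma>1 \<sigma>2 s. \<forall>n. p !! n \<in> V"
proof (rule AE_play_measureI)
  show "Measurable.pred (stream_space (count_space UNIV)) (\<lambda>p. \<forall>n. p !! n \<in> V)"
    by (intro pred_intros_countable measurable_snth_count_space) simp
  show "AE \<omega> in stream_space choices. \<forall>n. play V1 V2 \<sigma>1 \<sigma>2 s \<omega> !! n \<in> V"
    using AE_choices
  proof eventually_elim
    case (elim \<omega>)
    then show ?case
      using is_history_last_in[OF is_history_walk[OF elim]] by (simp add: play_eq_walk)
  qed
qed

definition rising :: "('v \<Rightarrow> real) \<Rightarrow> real \<Rightarrow> 'v set" where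
  "rising \<rho> x = {v \<in> VP. \<exists>u \<in> E `` {v}. x < \<rho> u}"

(* The 1 keeps the minimum well defined when no random vertex has a successor. *)
definition min_move_prob :: real where
  "min_move_prob = Min (insert 1 ((\<lambda>(v, u). pmf (\<delta> v) u) ` (E \<inter> VP \<times> UNIV)))"

lemma min_move_prob_pos: "0 < min_move_prob"
  unfolding min_move_prob_def using finite_E set_pmf_\<delta>
  by (subst Min_gr_iff) (auto simp: pmf_positive)

lemma min_move_prob_le: "v \<in> VP \<Longrightarrow> (v, u) \<in> E \<Longrightarrow> min_move_prob \<le> pmf (\<delta> v) u"
  unfolding min_move_prob_def using finite_E by (intro Min_le) auto

lemma prob_choice_neq:
  assumes "v \<in> VP"
  shows "measure_pmf.prob choices {f. f v \<noteq> u} = 1 - pmf (\<delta> v) u"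
proof -
  have "map_pmf (\<lambda>f. f v) choices = \<delta> v"
    using Pi_pmf_component[OF finite_VP, of v s \<delta>] assms by (simp add: choices_def)
  have "{f. f v \<noteq> u} = (\<lambda>f. f v) -` (UNIV - {u})"
    by auto
  then have "measure_pmf.prob choices {f. f v \<noteq> u} = measure_pmf.prob (\<delta> v) (UNIV - {u})"
    by (simp only: measure_map_pmf[symmetric] \<open>map_pmf (\<lambda>f. f v) choices = \<delta> v\<close>)
  also have "\<dots> = 1 - pmf (\<delta> v) u"
    using measure_pmf.prob_compl[of "{u}" "\<delta> v"] by (simp add: measure_pmf_single)
  finally show ?thesis .
qed

lemma escaping_walk_sublevel:
  "escaping_walk choices extend (\<lambda>l. \<rho> (last l) \<le> x) (\<lambda>l. last l \<in> rising \<rho> x) min_move_prob"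
proof (unfold_locales)
  show "countable (range (extend l))" for l
    by (rule countable_range_extend)
  show "0 < min_move_prob"
    by (rule min_move_prob_pos)
  fix l
  assume "last l \<in> rising \<rho> x"
  then obtain u where v: "last l \<in> VP" and u: "(last l, u) \<in> E" "x < \<rho> u"
    by (auto simp: rising_def)
  have "{f. \<rho> (last (extend l f)) \<le> x} \<subseteq> {f. f (last l) \<noteq> u}"
    using v u E_subset disjoint_VP by (auto simp: extend_def move_def)
  then have "measure_pmf.prob choices {f. \<rho> (last (extend l f)) \<le> x} \<le>
      measure_pmf.prob choices {f. f (last l) \<noteq> u}"
    by (rule measure_pmf.finite_measure_mono) simp
  also have "\<dots> \<le> 1 - min_move_prob"
    using prob_choice_neq[OF v] min_move_prob_le[OF v u(1)] by simp
  finally show "measure_pmf.prob choices {f. \<rho> (last (extend l f)) \<le> x} \<le> 1 - min_move_prob" .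
qed

end

section \<open>Potentials\<close>

lemma finite_range_frequent_drop:
  fixes a :: "nat \<Rightarrow> 'a::linorder"
  assumes "finite (range a)" and "\<nexists>N. \<forall>n\<ge>N. a n = a N"
  shows "\<exists>x. (\<forall>\<^sub>F n in sequentially. a n \<le> x) \<and> (\<exists>\<^sub>F n in sequentially. a n = x \<and> a (Suc n) < x)"
proof -
  define X where "X = {y \<in> range a. \<exists>\<^sub>F n in sequentially. a n = y}"
  have "\<forall>\<^sub>F n in sequentially. \<forall>y \<in> range a - X. a n \<noteq> y"
    using assms(1) by (intro eventually_ball_finite) (auto simp: X_def not_frequently)
  then have ev_X: "\<forall>\<^sub>F n in sequentially. a n \<in> X"
    by eventually_elim auto
  have "finite X"
    using assms(1) by (simp add: X_def)
  moreover from ev_X have "X \<noteq> {}"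
    unfolding eventually_sequentially by blast
  ultimately have x: "Max X \<in> X"
    by (rule Max_in)
  have freq_x: "\<exists>\<^sub>F n in sequentially. a n = Max X"
    using x unfolding X_def by blast
  have below: "\<forall>\<^sub>F n in sequentially. a n \<le> Max X"
    using ev_X by eventually_elim (simp add: \<open>finite X\<close>)
  show ?thesis
  proof (rule exI, rule conjI[OF below], rule ccontr)
    let ?x = "Max X"
    assume "\<not> (\<exists>\<^sub>F n in sequentially. a n = ?x \<and> a (Suc n) < ?x)"
    moreover have "\<forall>\<^sub>F n in sequentially. a (Suc n) \<le> ?x"
      using below by (rule eventually_sequentially_Suc[THEN iffD2])
    ultimately have "\<forall>\<^sub>F n in sequentially. a n = ?x \<longrightarrow> a (Suc n) = ?x"
      unfolding not_frequently by eventually_elim auto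
    then obtain N where stay: "\<And>n. n \<ge> N \<Longrightarrow> a n = ?x \<Longrightarrow> a (Suc n) = ?x"
      unfolding eventually_sequentially by blast
    obtain n where "n \<ge> N" "a n = ?x"
      using freq_x unfolding frequently_sequentially by blast
    have "a m = a n" if "m \<ge> n" for m
      using that
    proof (induction m rule: dec_induct)
      case (step m)
      then show ?case
        using stay \<open>n \<ge> N\<close> \<open>a n = ?x\<close> by simp
    qed simp
    then show False
      using assms(2) by blast
  qed
qed

lemma below_pmf_mean_imp_above:
  fixes d :: "'a pmf" and \<rho> :: "'a \<Rightarrow> real"
  assumes "finite (set_pmf d)" and "u\<^sub>0 \<in> set_pmf d"
    and "\<rho> u\<^sub>0 < (\<Sum>u\<in>set_pmf d. pmf d u * \<rho> u)"
  shows "\<exists>u\<in>set_pmf d. (\<Sum>u\<in>set_pmf d. pmf d u * \<rho> u) < \<rho> u"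
proof (rule ccontr)
  let ?m = "\<Sum>u\<in>set_pmf d. pmf d u * \<rho> u"
  assume "\<not> ?thesis"
  then have le: "\<And>u. u \<in> set_pmf d \<Longrightarrow> \<rho> u \<le> ?m"
    by (simp add: not_less)
  have "?m < (\<Sum>u\<in>set_pmf d. pmf d u * ?m)"
  proof (rule sum_strict_mono_ex1[OF assms(1)])
    show "\<forall>u\<in>set_pmf d. pmf d u * \<rho> u \<le> pmf d u * ?m"
      using le by (auto intro: mult_left_mono)
    show "\<exists>u\<in>set_pmf d. pmf d u * \<rho> u < pmf d u * ?m"
      using assms(2,3) by (intro bexI[of _ u\<^sub>0]) (auto simp: pmf_positive)
  qed
  also have "\<dots> = ?m"
    using sum_pmf_eq_1[OF assms(1) order.refl] by (simp add: sum_distrib_right[symmetric])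
  finally show False
    by simp
qed

context stochastic_game_play
begin

definition nondecreasing_potential :: "('v \<Rightarrow> real) \<Rightarrow> bool" where
  "nondecreasing_potential \<rho> \<longleftrightarrow>
     (\<forall>h. is_history V E h \<and> last h \<in> V1 \<longrightarrow> \<rho> (last h) \<le> \<rho> (\<sigma>1 h)) \<and>
     (\<forall>h. is_history V E h \<and> last h \<in> V2 \<longrightarrow> \<rho> (last h) \<le> \<rho> (\<sigma>2 h)) \<and>
     (\<forall>v\<in>VP. \<rho> v = (\<Sum>u\<in>E `` {v}. pmf (\<delta> v) u * \<rho> u))"

lemma bellman_nondecreasing_potential:
  assumes "bellman V E V1 V2 VP \<delta> r" and "i \<in> {1, 2}"
    and keep: "\<forall>h. is_history V E h \<and> last h \<in> (if i = 1 then V1 else V2) \<longrightarrow>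
      r ((if i = 1 then \<sigma>1 else \<sigma>2) h) = r (last h)"
  shows "nondecreasing_potential (\<lambda>v. if i = 1 then r v else - r v)"
  unfolding nondecreasing_potential_def
proof (intro conjI allI impI ballI)
  fix h
  assume h: "is_history V E h \<and> last h \<in> V1"
  then have "\<sigma>1 h \<in> E `` {last h}"
    using strategy1 by (simp add: strategy_def)
  then have "r (\<sigma>1 h) \<le> Max (r ` (E `` {last h}))"
    using finite_successors by (intro Max_ge) simp_all
  also have "\<dots> = r (last h)"
    using assms(1) h by (simp add: bellman_def)
  finally show "(if i = 1 then r (last h) else - r (last h)) \<le> (if i = 1 then r (\<sigma>1 h) else - r (\<sigma>1 h))"
    using keep h by (cases "i = 1") simp_all
next
  fix h
  assume h: "is_history V E h \<and> last h \<in> V2"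
  then have "\<sigma>2 h \<in> E `` {last h}"
    using strategy2 by (simp add: strategy_def)
  then have "Min (r ` (E `` {last h})) \<le> r (\<sigma>2 h)"
    using finite_successors by (intro Min_le) simp_all
  moreover have "Min (r ` (E `` {last h})) = r (last h)"
    using assms(1) h by (simp add: bellman_def)
  ultimately show "(if i = 1 then r (last h) else - r (last h)) \<le> (if i = 1 then r (\<sigma>2 h) else - r (\<sigma>2 h))"
    using assms(2) keep h by (cases "i = 1") simp_all
next
  fix v
  assume "v \<in> VP"
  then have "r v = (\<Sum>u\<in>E `` {v}. pmf (\<delta> v) u * r u)"
    using assms(1) by (simp add: bellman_def)
  then show "(if i = 1 then r v else - r v) =
      (\<Sum>u\<in>E `` {v}. pmf (\<delta> v) u * (if i = 1 then r u else - r u))"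
    by (simp add: sum_negf)
qed

lemma potential_drop_at_rising:
  assumes "nondecreasing_potential \<rho>" and "is_history V E l" and "f \<in> set_pmf choices"
    and drop: "\<rho> (move l f) < \<rho> (last l)"
  shows "last l \<in> rising \<rho> (\<rho> (last l))"
proof -
  have "last l \<in> V1 \<Longrightarrow> \<rho> (last l) \<le> \<rho> (\<sigma>1 l)" "last l \<in> V2 \<Longrightarrow> \<rho> (last l) \<le> \<rho> (\<sigma>2 l)"
    using assms(1,2) by (simp_all add: nondecreasing_potential_def)
  then have "last l \<notin> V1" "last l \<notin> V2"
    using drop by (auto simp: move_def split: if_splits)
  then have v: "last l \<in> VP"
    using is_history_last_in[OF assms(2)] vertex_cases by blast
  have mean: "\<rho> (last l) = (\<Sum>u\<in>set_pmf (\<delta> (last l)). pmf (\<delta> (last l)) u * \<rho> u)"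
    using assms(1) v set_pmf_\<delta> by (simp add: nondecreasing_potential_def)
  have "move l f \<in> set_pmf (\<delta> (last l))"
    using move_edge[OF assms(2,3)] set_pmf_\<delta>[OF v] by simp
  then obtain u where "u \<in> set_pmf (\<delta> (last l))" "\<rho> (last l) < \<rho> u"
    using below_pmf_mean_imp_above[of "\<delta> (last l)" "move l f" \<rho>] finite_successors set_pmf_\<delta>[OF v] drop mean
    by auto
  then show ?thesis
    using v set_pmf_\<delta>[OF v] by (auto simp: rising_def)
qed

lemma potential_walk_eventually_constant:
  assumes "nondecreasing_potential \<rho>" and choices: "\<forall>n. \<omega> !! n \<in> set_pmf choices"
    and not_trapped: "\<forall>x\<in>\<rho> ` V. (\<forall>\<^sub>F n in sequentially. \<rho> (last (walk extend [s] \<omega> n)) \<le> x) \<longrightarrow>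
      \<not> (\<exists>\<^sub>F n in sequentially. last (walk extend [s] \<omega> n) \<in> rising \<rho> x)"
  shows "\<exists>N. \<forall>n\<ge>N. \<rho> (last (walk extend [s] \<omega> n)) = \<rho> (last (walk extend [s] \<omega> N))"
proof (rule ccontr)
  define a where "a n = \<rho> (last (walk extend [s] \<omega> n))" for n
  have hist: "is_history V E (walk extend [s] \<omega> n)" for n
    using choices by (rule is_history_walk)
  have range_a: "range a \<subseteq> \<rho> ` V"
    using is_history_last_in[OF hist] by (auto simp: a_def)
  assume "\<not> ?thesis"
  then have "\<nexists>N. \<forall>n\<ge>N. a n = a N"
    by (simp add: a_def)
  moreover have "finite (range a)"
    using range_a by (rule finite_subset[OF _ finite_imageI[OF finite_V]])
  ultimately obtain x where below: "\<forall>\<^sub>F n in sequentially. a n \<le> x"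
    and drops: "\<exists>\<^sub>F n in sequentially. a n = x \<and> a (Suc n) < x"
    using finite_range_frequent_drop by blast
  have "x \<in> \<rho> ` V"
    using frequently_ex[OF drops] range_a by blast
  moreover have "\<exists>\<^sub>F n in sequentially. last (walk extend [s] \<omega> n) \<in> rising \<rho> x"
    using drops
  proof (rule frequently_elim1)
    fix n
    assume drop_n: "a n = x \<and> a (Suc n) < x"
    then have "\<rho> (move (walk extend [s] \<omega> n) (\<omega> !! n)) < \<rho> (last (walk extend [s] \<omega> n))"
      by (simp add: a_def extend_def)
    from potential_drop_at_rising[OF assms(1) hist choices[rule_format] this]
    show "last (walk extend [s] \<omega> n) \<in> rising \<rho> x"
      using drop_n by (simp add: a_def)
  qed
  ultimately show False
    using not_trapped below unfolding a_def by blast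
qed

theorem AE_play_potential_eventually_constant:
  assumes "nondecreasing_potential \<rho>"
  shows "AE p in play_measure V1 V2 VP \<delta> \<sigma>1 \<sigma>2 s. \<exists>N. \<forall>n\<ge>N. \<rho> (p !! n) = \<rho> (p !! N)"
proof (rule AE_play_measureI)
  have "Measurable.pred (stream_space (count_space UNIV)) (\<lambda>p. \<rho> (p !! n) = \<rho> (p !! N))" for n N
    unfolding pred_def by (intro borel_measurable_eq measurable_snth_count_space) simp_all
  then show "Measurable.pred (stream_space (count_space UNIV)) (\<lambda>p. \<exists>N. \<forall>n\<ge>N. \<rho> (p !! n) = \<rho> (p !! N))"
    by (intro pred_intros_countable pred_intros_imp') simp_all
  have "AE \<omega> in stream_space choices. \<forall>x\<in>\<rho> ` V.
      (\<forall>\<^sub>F n in sequentially. \<rho> (last (walk extend [s] \<omega> n)) \<le> x) \<longrightarrow>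
      \<not> (\<exists>\<^sub>F n in sequentially. last (walk extend [s] \<omega> n) \<in> rising \<rho> x)"
    using finite_V escaping_walk.AE_eventually_Safe_imp_not_frequently_Good[OF escaping_walk_sublevel]
    by (intro AE_finite_allI) simp_all
  with AE_choices
  show "AE \<omega> in stream_space choices. \<exists>N. \<forall>n\<ge>N.
      \<rho> (play V1 V2 \<sigma>1 \<sigma>2 s \<omega> !! n) = \<rho> (play V1 V2 \<sigma>1 \<sigma>2 s \<omega> !! N)"
  proof eventually_elim
    case (elim \<omega>)
    then show ?case
      using potential_walk_eventually_constant[OF assms] by (simp add: play_eq_walk)
  qed
qed

end

lemma eventually_in_class:
  assumes "\<forall>n. p !! n \<in> V" and "\<forall>n\<ge>N. r (p !! n) = r (p !! N)"
  shows "\<exists>C\<in>classes V r. \<exists>n. \<forall>m\<ge>n. p !! m \<in> C"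
proof (rule bexI)
  show "\<exists>n. \<forall>m\<ge>n. p !! m \<in> {u \<in> V. r u = r (p !! N)}"
  proof (intro exI allI impI)
    fix m
    assume "N \<le> m"
    then show "p !! m \<in> {u \<in> V. r u = r (p !! N)}"
      using assms(1) assms(2)[rule_format, of m] by simp
  qed
  show "{u \<in> V. r u = r (p !! N)} \<in> classes V r"
    unfolding classes_def by (rule CollectI, rule exI[of _ "p !! N"]) (simp add: assms(1))
qed

theorem proposition4:
  fixes V V1 V2 VP :: "'v set" and E :: "('v \<times> 'v) set" and \<delta> :: "'v \<Rightarrow> 'v pmf"
    and r :: "'v \<Rightarrow> real" and i :: nat and \<sigma>1 \<sigma>2 :: "'v list \<Rightarrow> 'v" and s :: 'v
  assumes "stochastic_game V E V1 V2 VP \<delta>"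
    and "bellman V E V1 V2 VP \<delta> r"
    and "i \<in> {1, 2}"
    and "strategy V E V1 \<sigma>1" and "strategy V E V2 \<sigma>2"
    and "\<forall>h. is_history V E h \<and> last h \<in> (if i = 1 then V1 else V2) \<longrightarrow>
           r ((if i = 1 then \<sigma>1 else \<sigma>2) h) = r (last h)"
    and "s \<in> V"
  shows "AE p in play_measure V1 V2 VP \<delta> \<sigma>1 \<sigma>2 s. \<exists>C\<in>classes V r. \<exists>n. \<forall>m\<ge>n. p !! m \<in> C"
proof -
  interpret stochastic_game_play V E V1 V2 VP \<delta> \<sigma>1 \<sigma>2 s
    using assms(1,4,5,7) by unfold_locales
  have "nondecreasing_potential (\<lambda>v. if i = 1 then r v else - r v)"
    using assms(2,3,6) by (rule bellman_nondecreasing_potential)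
  from AE_play_potential_eventually_constant[OF this]
  have "AE p in play_measure V1 V2 VP \<delta> \<sigma>1 \<sigma>2 s. \<exists>N. \<forall>n\<ge>N. r (p !! n) = r (p !! N)"
    by (rule eventually_mono) (cases "i = 1", simp_all)
  with AE_play_in_V show ?thesis
    by eventually_elim (use eventually_in_class in blast)
qed

end
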